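(* Let $T=\omega^{<\omega}$ be the tree of all finite sequences of natural numbers ordered by end-extension $\sqsubseteq$. There is a colouring $c:T\to\omega$ such that for every strong subtree $T'$ of $T$ of infinite height, $c[T']=\omega$.
   Context: For a tree $T$, the level of $t$ is the number of its strict predecessors; the tree is balanced if it has infinite height and no maximal nodes, or all maximal nodes lie at the top level. A subtree is a subset with the induced order in which meets agree with those of $T$. A strong subtree $S$ of $T$ is either empty or a rooted balanced subtree such that every level of $S$ is contained in a single level of $T$ and, for every non-maximal $s\in S$ and every immediate successor $t$ of $s$ in $T$, exactly one immediate successor of $s$ in $S$ lies above (or equals) $t$. *)

theory Defs
  imports "HOL-Library.Sublist"
begin

text \<open>The tree T = omega^{<omega}: all finite sequences of naturals (type nat list),
ordered by end-extension, i.e. the prefix order (strict: strict_prefix).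
Subsets S of T carry the induced order.\<close>

definition lvl_in :: "nat list set \<Rightarrow> nat list \<Rightarrow> nat" where
  "lvl_in S s = card {u \<in> S. strict_prefix u s}"

definition maximal_in :: "nat list set \<Rightarrow> nat list \<Rightarrow> bool" where
  "maximal_in S s \<longleftrightarrow> s \<in> S \<and> \<not> (\<exists>u\<in>S. strict_prefix s u)"

definition infinite_height :: "nat list set \<Rightarrow> bool" where
  "infinite_height S \<longleftrightarrow> (\<forall>n. \<exists>s\<in>S. lvl_in S s \<ge> n)"

definition balanced :: "nat list set \<Rightarrow> bool" where
  "balanced S \<longleftrightarrow>
     (infinite_height S \<and> (\<forall>s\<in>S. \<not> maximal_in S s))
   \<or> (\<exists>h. (\<forall>s\<in>S. lvl_in S s \<le> h) \<and> (\<forall>s\<in>S. maximal_in S s \<longrightarrow> lvl_in S s = h))"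

text \<open>Subtree: the meet in T (longest common prefix) of any two elements of S lies in S,
so that meets in S exist and agree with those of T.\<close>
definition subtree :: "nat list set \<Rightarrow> bool" where
  "subtree S \<longleftrightarrow> (\<forall>s\<in>S. \<forall>t\<in>S. \<exists>u\<in>S. prefix u s \<and> prefix u t \<and>
                      (\<forall>v. prefix v s \<and> prefix v t \<longrightarrow> prefix v u))"

definition rooted :: "nat list set \<Rightarrow> bool" where
  "rooted S \<longleftrightarrow> (\<exists>r\<in>S. \<forall>s\<in>S. prefix r s)"

definition imm_succ_in :: "nat list set \<Rightarrow> nat list \<Rightarrow> nat list \<Rightarrow> bool" where
  "imm_succ_in S s t \<longleftrightarrow> s \<in> S \<and> t \<in> S \<and> strict_prefix s t \<and>
      \<not> (\<exists>u\<in>S. strict_prefix s u \<and> strict_prefix u t)"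

definition strong_subtree :: "nat list set \<Rightarrow> bool" where
  "strong_subtree S \<longleftrightarrow> S = {} \<or>
     (subtree S \<and> rooted S \<and> balanced S \<and>
      (\<forall>n. \<exists>m. \<forall>s\<in>S. lvl_in S s = n \<longrightarrow> length s = m) \<and>
      (\<forall>s\<in>S. \<not> maximal_in S s \<longrightarrow>
         (\<forall>k::nat. \<exists>!s'. imm_succ_in S s s' \<and> prefix (s @ [k]) s')))"

end

theory Submission
  imports Defs "HOL-Library.Nat_Bijection"
begin

text \<open>Read each entry of a node t as a pair (a, b) via the Cantor pairing; the colour of t is
the b of the first entry whose a equals the length of t.  A strong subtree of infinite height
with root r branches above r in every direction k, and all its nodes at level N have one
common length L \<ge> N.  Taking N beyond every entry of r and k = (L, j), any node at level N
above r @ [k] gets colour j.\<close>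

definition col :: "nat list \<Rightarrow> nat" where
  "col t = snd (prod_decode (t ! (LEAST i. i < length t \<and> fst (prod_decode (t ! i)) = length t)))"

lemma col_append_encode:
  assumes "length (r @ prod_encode (n, j) # w) = n" and "\<forall>x\<in>set r. x < n"
  shows "col (r @ prod_encode (n, j) # w) = j"
proof -
  let ?t = "r @ prod_encode (n, j) # w"
  have "(LEAST i. i < length ?t \<and> fst (prod_decode (?t ! i)) = length ?t) = length r"
  proof (rule Least_equality)
    fix i assume i: "i < length ?t \<and> fst (prod_decode (?t ! i)) = length ?t"
    show "length r \<le> i"
    proof (rule ccontr)
      assume "\<not> length r \<le> i"
      then have "r ! i \<in> set r" "?t ! i = r ! i" by (simp_all add: nth_append)
      moreover have "fst (prod_decode (r ! i)) \<le> r ! i"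
        using le_prod_encode_1[of "fst (prod_decode (r ! i))" "snd (prod_decode (r ! i))"] by simp
      ultimately show False using i assms by auto
    qed
  qed (use assms in simp)
  then show ?thesis unfolding col_def by simp
qed

lemma finite_strict_prefixes_in: "finite {u \<in> S. strict_prefix u s}"
  by (rule finite_subset[of _ "set (prefixes s)"]) auto

lemma lvl_in_le_length: "lvl_in S s \<le> length s"
proof -
  have "{u \<in> S. strict_prefix u s} \<subseteq> set (prefixes s) - {s}" by auto
  then have "lvl_in S s \<le> card (set (prefixes s) - {s})"
    unfolding lvl_in_def by (rule card_mono[rotated]) simp
  then show ?thesis by simp
qed

lemma lvl_in_root:
  assumes "\<forall>s\<in>S. prefix r s"
  shows "lvl_in S r = 0"
proof -
  have "{u \<in> S. strict_prefix u r} = {}"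
    using assms by (auto simp: strict_prefix_def)
  then show ?thesis unfolding lvl_in_def by (metis card.empty)
qed

lemma lvl_in_imm_succ:
  assumes "imm_succ_in S s s'"
  shows "lvl_in S s' = Suc (lvl_in S s)"
proof -
  have "{u \<in> S. strict_prefix u s'} = insert s {u \<in> S. strict_prefix u s}"
  proof (intro equalityI subsetI)
    fix u assume u: "u \<in> {u \<in> S. strict_prefix u s'}"
    then have "prefix u s \<or> prefix s u"
      using assms prefix_same_cases[of u s' s] by (auto simp: imm_succ_in_def)
    then show "u \<in> insert s {u \<in> S. strict_prefix u s}"
      using u assms by (auto simp: imm_succ_in_def strict_prefix_def)
  qed (use assms in \<open>auto simp: imm_succ_in_def strict_prefix_def\<close>)
  then show ?thesis unfolding lvl_in_def using finite_strict_prefixes_in[of S s] by simp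
qed

lemma balanced_infinite_height_no_maximal:
  assumes "balanced S" and "infinite_height S" and "s \<in> S"
  shows "\<not> maximal_in S s"
proof -
  have "\<not> (\<forall>s\<in>S. lvl_in S s \<le> h)" for h
    using assms(2) unfolding infinite_height_def by (metis Suc_n_not_le_n le_trans)
  then show ?thesis using assms(1,3) unfolding balanced_def by blast
qed

lemma strong_subtree_same_length:
  assumes "strong_subtree S" and "s \<in> S" "t \<in> S" and "lvl_in S s = lvl_in S t"
  shows "length s = length t"
  using assms unfolding strong_subtree_def by (metis empty_iff)

lemma strong_subtree_imm_succ:
  assumes "strong_subtree S" and "infinite_height S" and "s \<in> S"
  obtains s' where "imm_succ_in S s s'" and "prefix (s @ [k]) s'"
  using assms balanced_infinite_height_no_maximal[of S s]
  unfolding strong_subtree_def by blast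

lemma strong_subtree_ascend:
  assumes "strong_subtree S" and "infinite_height S" and "s \<in> S"
  shows "\<exists>t\<in>S. prefix s t \<and> lvl_in S t = lvl_in S s + d"
proof (induction d)
  case (Suc d)
  then obtain t where t: "t \<in> S" "prefix s t" "lvl_in S t = lvl_in S s + d" by blast
  obtain t' where "imm_succ_in S t t'"
    using strong_subtree_imm_succ[OF assms(1,2) t(1)] by blast
  with t show ?case
    by (intro bexI[of _ t']) (auto simp: lvl_in_imm_succ imm_succ_in_def)
qed (use assms(3) in auto)

lemma strong_subtree_directions_above_root:
  assumes "strong_subtree S" and "infinite_height S"
  obtains r where "r \<in> S"
    and "\<And>n k. \<exists>t\<in>S. prefix (r @ [k]) t \<and> lvl_in S t = Suc n"
proof -
  have "S \<noteq> {}" using assms(2) unfolding infinite_height_def by blast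
  then obtain r where r: "r \<in> S" "\<forall>s\<in>S. prefix r s"
    using assms(1) unfolding strong_subtree_def rooted_def by blast
  have "\<exists>t\<in>S. prefix (r @ [k]) t \<and> lvl_in S t = Suc n" for n k
  proof -
    obtain s' where s': "imm_succ_in S r s'" "prefix (r @ [k]) s'"
      using strong_subtree_imm_succ[OF assms r(1)] by blast
    then have "s' \<in> S" "lvl_in S s' = 1"
      using lvl_in_imm_succ lvl_in_root[OF r(2)] by (auto simp: imm_succ_in_def)
    then show ?thesis
      using strong_subtree_ascend[OF assms, of s' n] s'(2) prefix_order.trans by fastforce
  qed
  with r(1) show thesis by (rule that)
qed

theorem proposition6p4:
  shows "\<exists>c :: nat list \<Rightarrow> nat. \<forall>S. strong_subtree S \<and> infinite_height S \<longrightarrow> c ` S = UNIV"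
proof (intro exI allI impI)
  fix S assume S: "strong_subtree S \<and> infinite_height S"
  then obtain r where "r \<in> S"
    and above_r: "\<And>n k. \<exists>t\<in>S. prefix (r @ [k]) t \<and> lvl_in S t = Suc n"
    using strong_subtree_directions_above_root by blast
  show "col ` S = UNIV"
  proof (intro set_eqI iffI)
    fix j :: nat
    define N where "N = Suc (sum_list r)"
    obtain t0 where t0: "t0 \<in> S" "lvl_in S t0 = N"
      using above_r[where n = "sum_list r" and k = 0] N_def by blast
    define L where "L = length t0"
    obtain t where t: "t \<in> S" "prefix (r @ [prod_encode (L, j)]) t" "lvl_in S t = N"
      using above_r[where n = "sum_list r" and k = "prod_encode (L, j)"] N_def by blast
    then obtain w where w: "t = r @ prod_encode (L, j) # w" by (auto simp: prefix_def)
    have "length t = L"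
      using strong_subtree_same_length S t(1,3) t0 L_def by metis
    moreover have "\<forall>x\<in>set r. x < L"
      using member_le_sum_list lvl_in_le_length[of S t0] t0(2) N_def L_def by fastforce
    ultimately have "col t = j" using w col_append_encode by simp
    with t(1) show "j \<in> col ` S" by blast
  qed simp
qed

end
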